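(* Let $N\ge1$, $1\le S\le N$, $L$ a band-width vector, $\dot W$ an $L$-admissible matrix, $W_\varepsilon=\mathrm{Id}+\varepsilon\dot W$, $\beta\in\Gamma$ and $k\in\mathbb Z$. Then there exists $\gamma_k>0$ such that for every $0<\varepsilon<\gamma_k$ the matrix $P_{\varepsilon,\beta}:=D_{k,\beta,L}W_\varepsilon$ has $N$ distinct eigenvalues.
   Context: A band-width vector is $L=(L_1,\dots,L_S)$ of positive integers with $\sum_sL_s=N$; $N_0=0$, $N_s=N_{s-1}+L_s$, $B_s=\{j:N_{s-1}<j\le N_s\}$. For $\beta\in\mathbb R^S$, $D_{k,\beta,L}$ is the $N\times N$ diagonal matrix whose $j$-th diagonal entry is $e^{-2\pi ik\beta_s}$ for $j\in B_s$. $\dot W$ is $L$-admissible if it is real symmetric and (1) $\dot W_{ij}\ge0$ for $i\ne j$, $\sum_j\dot W_{ij}=0$ for all $i$; (2) $\dot W$ has $N$ distinct eigenvalues; (3) for each $s$, $\hat W_s=(\dot W_{jk})_{j,k\in B_s}$ has $L_s$ distinct eigenvalues. $\Gamma=\{\beta\in\mathbb R^S: e^{-2\pi ik\beta_{s_1}}\neq e^{-2\pi ik\beta_{s_2}}\text{ for all }k\in\mathbb Z\setminus\{0\}\text{ and all }s_1\neq s_2\}$. *)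

theory Defs
  imports "HOL-Analysis.Analysis" "Jordan_Normal_Form.Char_Poly"
begin

text \<open>Band-width vector L = (L_1,...,L_S) as a list (0-based block index s < S = length L).
  N_s = sum of the first s entries (so block s is {N_s ..< N_s + L!s}, 0-based).\<close>

definition bw_vector :: "nat list \<Rightarrow> nat \<Rightarrow> bool" where
  "bw_vector L N \<longleftrightarrow> (\<forall>s<length L. L ! s > 0) \<and> sum_list L = N"

definition bw_start :: "nat list \<Rightarrow> nat \<Rightarrow> nat" where
  "bw_start L s = sum_list (take s L)"

definition bw_block :: "nat list \<Rightarrow> nat \<Rightarrow> nat set" where
  "bw_block L s = {bw_start L s ..< bw_start L s + L ! s}"

definition block_of :: "nat list \<Rightarrow> nat \<Rightarrow> nat" where
  "block_of L j = (THE s. s < length L \<and> j \<in> bw_block L s)"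

definition D_mat :: "int \<Rightarrow> (nat \<Rightarrow> real) \<Rightarrow> nat list \<Rightarrow> complex mat" where
  "D_mat k \<beta> L = mat (sum_list L) (sum_list L) (\<lambda>(i,j).
      if i = j then exp (- 2 * pi * \<i> * of_int k * of_real (\<beta> (block_of L j))) else 0)"

definition block_mat :: "nat list \<Rightarrow> 'a mat \<Rightarrow> nat \<Rightarrow> 'a mat" where
  "block_mat L W s = mat (L ! s) (L ! s) (\<lambda>(i,j). W $$ (bw_start L s + i, bw_start L s + j))"

definition L_admissible :: "nat list \<Rightarrow> real mat \<Rightarrow> bool" where
  "L_admissible L W \<longleftrightarrow>
     (let N = sum_list L in
      W \<in> carrier_mat N N \<and> W\<^sup>T = W \<and>
      (\<forall>i<N. \<forall>j<N. i \<noteq> j \<longrightarrow> W $$ (i,j) \<ge> 0) \<and>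
      (\<forall>i<N. (\<Sum>j<N. W $$ (i,j)) = 0) \<and>
      card {x. eigenvalue W x} = N \<and>
      (\<forall>s<length L. card {x. eigenvalue (block_mat L W s) x} = L ! s))"

definition Gamma_set :: "nat \<Rightarrow> (nat \<Rightarrow> real) set" where
  "Gamma_set S = {\<beta>. \<forall>k::int. k \<noteq> 0 \<longrightarrow> (\<forall>s1<S. \<forall>s2<S. s1 \<noteq> s2 \<longrightarrow>
      exp (- 2 * pi * \<i> * of_int k * of_real (\<beta> s1)) \<noteq>
      exp (- 2 * pi * \<i> * of_int k * of_real (\<beta> s2)))}"

end

(*
  For small \<epsilon> the eigenvalues of P = D (I + \<epsilon> W) lie near the diagonal entries d s of D,
  which are pairwise distinct on different blocks because \<beta> \<in> \<Gamma> (for k = 0 all of them are 1,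
  and the whole matrix is treated as a single block).  An eigenvalue near d s is written as
  \<mu> = d s (1 + \<epsilon> \<nu>).  Dividing the block-s rows of \<mu> I - P by \<epsilon> d s gives a matrix that
  depends polynomially on (\<nu>, \<epsilon>) and at \<epsilon> = 0 is singular exactly when \<nu> is an eigenvalue
  of the diagonal block W_s, since its remaining rows become (d s - d t) e_i with t \<noteq> s.
  By the minimum modulus principle, each of the L_s distinct eigenvalues of W_s persists as a
  nearby zero \<nu>(\<epsilon>) of its determinant.  The N numbers d s (1 + \<epsilon> \<nu>(\<epsilon>)) are then
  eigenvalues of P, and they are distinct: different blocks are kept apart by the distinct
  d s, eigenvalues of one block by the separation of the spectrum of W_s.
*)

theory Submission
  imports Defs "HOL-Complex_Analysis.Conformal_Mappings"
begin

lemma eigenvalues_finite_card_le: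
  assumes "(A :: 'a::field mat) \<in> carrier_mat n n"
  shows "finite {\<mu>. eigenvalue A \<mu>}" and "card {\<mu>. eigenvalue A \<mu>} \<le> n"
proof -
  have roots: "{\<mu>. eigenvalue A \<mu>} = {\<mu>. poly (char_poly A) \<mu> = 0}"
    using eigenvalue_root_char_poly[OF assms] by auto
  have "degree (char_poly A) = n" "char_poly A \<noteq> 0"
    using degree_monic_char_poly[OF assms] by auto
  then show "finite {\<mu>. eigenvalue A \<mu>}" "card {\<mu>. eigenvalue A \<mu>} \<le> n"
    unfolding roots using poly_roots_finite card_poly_roots_bound by metis+
qed

lemma card_eigenvalues_eqI:
  assumes A: "(A :: 'a::field mat) \<in> carrier_mat n n" and g: "inj_on g I" "\<And>p. p \<in> I \<Longrightarrow> eigenvalue A (g p)"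
    and I: "card I = n"
  shows "card {\<mu>. eigenvalue A \<mu>} = n"
  using card_inj_on_le[OF g(1) _ eigenvalues_finite_card_le(1)[OF A]] g(2)
    eigenvalues_finite_card_le(2)[OF A] I
  by fastforce

lemma card_eigenvalues_map_of_real:
  assumes A: "A \<in> carrier_mat n n" and card: "card {x::real. eigenvalue A x} = n"
  shows "card {\<mu>::complex. eigenvalue (map_mat of_real A) \<mu>} = n"
  using card by (intro card_eigenvalues_eqI[of _ n complex_of_real "{x. eigenvalue A x}"])
    (use A of_real_hom.eigenvalue_hom in \<open>auto simp: inj_on_def\<close>)

lemma smult_one_mat_mult_vec:
  fixes v :: "'a::comm_semiring_1 vec"
  shows "v \<in> carrier_vec n \<Longrightarrow> (c \<cdot>\<^sub>m 1\<^sub>m n) *\<^sub>v v = c \<cdot>\<^sub>v v"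
  by (auto simp: scalar_prod_def mult_delta_left mult_delta_right intro!: eq_vecI)

definition row_select_mat :: "nat set \<Rightarrow> 'a mat \<Rightarrow> 'a mat \<Rightarrow> 'a mat" where
  "row_select_mat B A C =
     mat (dim_row A) (dim_col A) (\<lambda>(i, j). if i \<in> B then A $$ (i, j) else C $$ (i, j))"

lemma row_select_mat_carrier:
  "A \<in> carrier_mat n m \<Longrightarrow> row_select_mat B A C \<in> carrier_mat n m"
  by (simp add: row_select_mat_def)

lemma row_select_mat_mult_vec:
  assumes "A \<in> carrier_mat n m" "C \<in> carrier_mat n m" "v \<in> carrier_vec m" "i < n"
  shows "(row_select_mat B A C *\<^sub>v v) $ i = (if i \<in> B then (A *\<^sub>v v) $ i else (C *\<^sub>v v) $ i)"
  using assms by (auto simp: row_select_mat_def scalar_prod_def)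

lemma eventually_uniformly_close_on_compact:
  fixes F :: "'a::metric_space \<Rightarrow> 'b::heine_borel \<Rightarrow> 'c::metric_space"
  assumes cont: "continuous_on UNIV (\<lambda>p. F (fst p) (snd p))" and K: "compact K" and e: "e > 0"
  shows "\<forall>\<^sub>F y in nhds y0. \<forall>x\<in>K. dist (F x y) (F x y0) < e"
proof -
  have "uniformly_continuous_on (K \<times> cball y0 1) (\<lambda>p. F (fst p) (snd p))"
    using K by (intro compact_uniformly_continuous continuous_on_subset[OF cont] compact_Times) auto
  then obtain \<delta> where \<delta>: "\<delta> > 0"
    and close: "\<And>p p'. p \<in> K \<times> cball y0 1 \<Longrightarrow> p' \<in> K \<times> cball y0 1 \<Longrightarrow> dist p' p < \<delta> \<Longrightarrow>
      dist (F (fst p') (snd p')) (F (fst p) (snd p)) < e"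
    unfolding uniformly_continuous_on_def using e by metis
  show ?thesis
    unfolding eventually_nhds_metric
  proof (intro exI[of _ "min \<delta> 1"] conjI allI impI ballI)
    fix y x assume "dist y y0 < min \<delta> 1" "x \<in> K"
    then show "dist (F x y) (F x y0) < e"
      using close[of "(x, y0)" "(x, y)"] by (simp add: dist_Pair_Pair dist_commute)
  qed (use \<delta> in simp)
qed

lemma minimum_modulus_frontier:
  assumes hol: "f holomorphic_on interior S" and cont: "continuous_on (closure S) f"
    and "bounded S" and nonzero: "\<And>z. z \<in> closure S \<Longrightarrow> f z \<noteq> 0"
    and frontier: "\<And>z. z \<in> frontier S \<Longrightarrow> m \<le> norm (f z)" and "\<xi> \<in> S" and m: "m > 0"
  shows "m \<le> norm (f \<xi>)"
proof -
  have "norm (inverse (f \<xi>)) \<le> inverse m"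
  proof (rule maximum_modulus_frontier[where f = "\<lambda>z. inverse (f z)"])
    have "f z \<noteq> 0" if "z \<in> interior S" for z
      using nonzero that interior_subset closure_subset by blast
    then show "(\<lambda>z. inverse (f z)) holomorphic_on interior S"
      using hol by (intro holomorphic_intros)
    show "continuous_on (closure S) (\<lambda>z. inverse (f z))"
      using cont nonzero by (auto intro!: continuous_intros)
    show "norm (inverse (f z)) \<le> inverse m" if "z \<in> frontier S" for z
      using frontier[OF that] m by (simp add: norm_inverse le_imp_inverse_le)
  qed fact+
  then show ?thesis
    using nonzero[of \<xi>] closure_subset \<open>\<xi> \<in> S\<close> m inverse_le_imp_le[of "norm (f \<xi>)" m]
    by (auto simp: norm_inverse)
qed

lemma holomorphic_zero_persists:
  fixes F :: "complex \<Rightarrow> 'a::heine_borel \<Rightarrow> complex"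
  assumes cont: "continuous_on UNIV (\<lambda>p. F (fst p) (snd p))"
    and hol: "\<And>y. (\<lambda>z. F z y) holomorphic_on ball z0 r"
    and r: "r > 0" and zero: "F z0 y0 = 0"
    and sphere: "\<And>z. z \<in> sphere z0 r \<Longrightarrow> F z y0 \<noteq> 0"
  shows "\<forall>\<^sub>F y in nhds y0. \<exists>z\<in>ball z0 r. F z y = 0"
proof -
  have cont_z: "continuous_on S (\<lambda>z. F z y)" for S y
    by (rule continuous_on_compose2[OF cont, of S "\<lambda>z. (z, y)", simplified])
      (auto intro!: continuous_intros)
  obtain z1 where z1: "z1 \<in> sphere z0 r"
    and min: "\<And>z. z \<in> sphere z0 r \<Longrightarrow> norm (F z1 y0) \<le> norm (F z y0)"
    using continuous_attains_inf[of "sphere z0 r" "\<lambda>z. norm (F z y0)"] r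
      continuous_on_norm[OF cont_z] by auto
  define m where "m = norm (F z1 y0)"
  have m: "m > 0"
    using sphere[OF z1] by (simp add: m_def)
  have "\<forall>\<^sub>F y in nhds y0. \<forall>z\<in>cball z0 r. dist (F z y) (F z y0) < m / 2"
    using m by (intro eventually_uniformly_close_on_compact[OF cont]) auto
  then show ?thesis
  proof eventually_elim
    case (elim y)
    show ?case
    proof (rule ccontr)
      assume no_zero: "\<not> (\<exists>z\<in>ball z0 r. F z y = 0)"
      have large: "m / 2 \<le> norm (F z y)" if z: "z \<in> sphere z0 r" for z
      proof -
        have "dist (F z y) (F z y0) < m / 2"
          using elim z by auto
        then show ?thesis
          using min[OF z] norm_triangle_ineq2[of "F z y0" "F z y"]
          by (simp add: m_def dist_norm norm_minus_commute)
      qed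
      have "m / 2 \<le> norm (F z0 y)"
      proof (rule minimum_modulus_frontier[where f = "\<lambda>z. F z y" and S = "cball z0 r"])
        show "F z y \<noteq> 0" if "z \<in> closure (cball z0 r)" for z
          using that no_zero large[of z] m by (cases "dist z0 z < r") (auto simp: dist_commute)
        show "(\<lambda>z. F z y) holomorphic_on interior (cball z0 r)"
          using hol by simp
        show "m / 2 \<le> norm (F z y)" if "z \<in> frontier (cball z0 r)" for z
          using large that r by simp
      qed (use cont_z r m in auto)
      moreover have "norm (F z0 y) < m / 2"
        using elim[rule_format, of z0] r zero by (simp add: dist_norm)
      ultimately show False by simp
    qed
  qed
qed

lemma finite_separation_radius:
  fixes A :: "'a::metric_space set"
  assumes "finite A"
  obtains r where "r > 0" and "\<And>x y. x \<in> A \<Longrightarrow> y \<in> A \<Longrightarrow> x \<noteq> y \<Longrightarrow> r < dist x y"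
proof -
  have "\<forall>\<^sub>F r in at_right 0. \<forall>x\<in>A. \<forall>y\<in>A. x \<noteq> y \<longrightarrow> r < dist x y"
  proof (intro eventually_ball_finite ballI)
    fix x y assume "x \<in> A" "y \<in> A"
    show "\<forall>\<^sub>F r in at_right 0. x \<noteq> y \<longrightarrow> r < dist x y"
      by (cases "x = y") (auto intro: order_tendstoD(2)[OF tendsto_ident_at])
  qed (use assms in auto)
  then show ?thesis
    using that eventually_happens'[OF trivial_limit_at_right_real] eventually_at_right_less
    by (metis (mono_tags, lifting) eventually_conj_iff)
qed

lemma eventually_scaled_perturbations_differ:
  fixes c c' :: complex
  assumes cc': "c \<noteq> c'" and K: "bounded K"
  shows "\<forall>\<^sub>F \<epsilon> in nhds 0. \<forall>\<nu>\<in>K. \<forall>\<nu>'\<in>K. c * (1 + of_real \<epsilon> * \<nu>) \<noteq> c' * (1 + of_real \<epsilon> * \<nu>')"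
proof -
  obtain R where R: "R > 0" "\<And>\<nu>. \<nu> \<in> K \<Longrightarrow> norm \<nu> \<le> R"
    using K bounded_pos by metis
  define C where "C = (norm c + norm c') * R"
  have C: "C \<ge> 0"
    using R by (simp add: C_def)
  show ?thesis
    unfolding eventually_nhds_metric
  proof (intro exI[of _ "norm (c - c') / (C + 1)"] conjI allI impI ballI notI)
    show "norm (c - c') / (C + 1) > 0"
      using cc' C by simp
    fix \<epsilon> :: real and \<nu> \<nu>' assume \<epsilon>: "dist \<epsilon> 0 < norm (c - c') / (C + 1)"
      and \<nu>: "\<nu> \<in> K" "\<nu>' \<in> K" and eq: "c * (1 + of_real \<epsilon> * \<nu>) = c' * (1 + of_real \<epsilon> * \<nu>')"
    have "c - c' = of_real \<epsilon> * (c' * \<nu>' - c * \<nu>)"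
      using eq by (simp add: algebra_simps)
    then have "norm (c - c') \<le> \<bar>\<epsilon>\<bar> * (norm c' * norm \<nu>' + norm c * norm \<nu>)"
      using norm_triangle_ineq4[of "c' * \<nu>'" "c * \<nu>"]
      by (simp add: norm_mult mult_left_mono)
    also have "\<dots> \<le> \<bar>\<epsilon>\<bar> * C"
      using mult_left_mono[OF R(2)[OF \<nu>(2)], of "norm c'"] mult_left_mono[OF R(2)[OF \<nu>(1)], of "norm c"]
      by (intro mult_left_mono) (auto simp: C_def algebra_simps)
    also have "\<dots> < norm (c - c')"
      using \<epsilon> C by (simp add: field_simps)
    finally show False by simp
  qed
qed

section \<open>Blocks of a band-width vector\<close>

lemma bw_start_Suc: "s < length L \<Longrightarrow> bw_start L (Suc s) = bw_start L s + L ! s"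
  by (simp add: bw_start_def take_Suc_conv_app_nth)

lemma bw_start_mono: "s \<le> t \<Longrightarrow> bw_start L s \<le> bw_start L t"
  unfolding bw_start_def by (metis le_Suc_ex sum_list_append take_add le_add1)

lemma bw_block_end_le: "s < length L \<Longrightarrow> bw_start L s + L ! s \<le> sum_list L"
  using bw_start_mono[of "Suc s" "length L" L] bw_start_Suc[of s L] by (simp add: bw_start_def)

lemma bw_block_unique:
  assumes "s < length L" "t < length L" "i \<in> bw_block L s" "i \<in> bw_block L t"
  shows "s = t"
proof -
  have "\<not> s < t" if "i \<in> bw_block L s" "i \<in> bw_block L t" "s < length L" for s t
    using that bw_start_mono[of "Suc s" t L] bw_start_Suc[of s L] by (auto simp: bw_block_def)
  then show ?thesis
    using assms by (metis linorder_neqE_nat)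
qed

lemma bw_block_exists: "i < sum_list L \<Longrightarrow> \<exists>s<length L. i \<in> bw_block L s"
proof (induction L arbitrary: i)
  case (Cons a L)
  show ?case
  proof (cases "i < a")
    case True
    then show ?thesis by (intro exI[of _ 0]) (auto simp: bw_block_def bw_start_def)
  next
    case False
    then have "i - a < sum_list L"
      using Cons.prems by simp
    then obtain s where "s < length L" "i - a \<in> bw_block L s"
      using Cons.IH by blast
    with False show ?thesis by (intro exI[of _ "Suc s"]) (auto simp: bw_block_def bw_start_def)
  qed
qed simp

lemma block_of_eqI: "s < length L \<Longrightarrow> i \<in> bw_block L s \<Longrightarrow> block_of L i = s"
  unfolding block_of_def using bw_block_unique by blast

lemma block_of_bw_block:
  assumes "i < sum_list L"
  shows "block_of L i < length L" and "i \<in> bw_block L (block_of L i)"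
  using bw_block_exists[OF assms] block_of_eqI by auto

lemma block_mat_carrier: "block_mat L W s \<in> carrier_mat (L ! s) (L ! s)"
  by (simp add: block_mat_def)

lemma block_mat_map_mat:
  assumes "W \<in> carrier_mat (sum_list L) (sum_list L)" "s < length L"
  shows "block_mat L (map_mat f W) s = map_mat f (block_mat L W s)"
  using assms bw_block_end_le[OF assms(2)] by (auto simp: block_mat_def intro!: eq_matI)

lemma mult_mat_vec_supported_on_bw_block:
  assumes W: "W \<in> carrier_mat (sum_list L) (sum_list L)" and s: "s < length L"
    and v: "v \<in> carrier_vec (sum_list L)"
    and supp: "\<And>j. j < sum_list L \<Longrightarrow> j \<notin> bw_block L s \<Longrightarrow> v $ j = 0"
    and i: "i < L ! s"
  shows "(W *\<^sub>v v) $ (bw_start L s + i) =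
    (block_mat L W s *\<^sub>v vec (L ! s) (\<lambda>j. v $ (bw_start L s + j))) $ i"
proof -
  let ?a = "bw_start L s"
  have block: "bw_block L s \<subseteq> {0..<sum_list L}" "?a + i \<in> bw_block L s"
    using bw_block_end_le[OF s] i by (auto simp: bw_block_def)
  have "(W *\<^sub>v v) $ (?a + i) = (\<Sum>j\<in>{0..<sum_list L}. W $$ (?a + i, j) * v $ j)"
    using W v block by (auto simp: scalar_prod_def)
  also have "\<dots> = (\<Sum>j\<in>bw_block L s. W $$ (?a + i, j) * v $ j)"
    using block(1) supp by (intro sum.mono_neutral_right) auto
  also have "\<dots> = (\<Sum>j\<in>{0..<L ! s}. W $$ (?a + i, ?a + j) * v $ (?a + j))"
    unfolding bw_block_def by (rule sum.reindex_bij_witness[of _ "\<lambda>j. ?a + j" "\<lambda>j. j - ?a"]) auto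
  also have "\<dots> = (block_mat L W s *\<^sub>v vec (L ! s) (\<lambda>j. v $ (?a + j))) $ i"
    using i by (simp add: block_mat_def scalar_prod_def)
  finally show ?thesis .
qed

definition block_scalar_mat :: "nat list \<Rightarrow> (nat \<Rightarrow> 'a::zero) \<Rightarrow> 'a mat" where
  "block_scalar_mat L d =
     mat (sum_list L) (sum_list L) (\<lambda>(i, j). if i = j then d (block_of L i) else 0)"

section \<open>The perturbed matrix and its rescaled characteristic matrix\<close>

lemma block_scalar_mat_carrier [simp]:
  "block_scalar_mat L d \<in> carrier_mat (sum_list L) (sum_list L)"
  by (simp add: block_scalar_mat_def)

lemma block_scalar_mat_mult_index:
  fixes d :: "nat \<Rightarrow> 'a::semiring_0"
  assumes "A \<in> carrier_mat (sum_list L) n" "i < sum_list L" "j < n"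
  shows "(block_scalar_mat L d * A) $$ (i, j) = d (block_of L i) * A $$ (i, j)"
  using assms by (simp add: block_scalar_mat_def scalar_prod_def mult_delta_left)

lemma block_scalar_mat_mult_vec:
  fixes d :: "nat \<Rightarrow> 'a::semiring_0"
  assumes "v \<in> carrier_vec (sum_list L)" "i < sum_list L"
  shows "(block_scalar_mat L d *\<^sub>v v) $ i = d (block_of L i) * v $ i"
  using assms by (simp add: block_scalar_mat_def scalar_prod_def mult_delta_left)

definition perturbed_mat :: "nat list \<Rightarrow> (nat \<Rightarrow> complex) \<Rightarrow> complex mat \<Rightarrow> real \<Rightarrow> complex mat" where
  "perturbed_mat L d W \<epsilon> = block_scalar_mat L d * (1\<^sub>m (sum_list L) + of_real \<epsilon> \<cdot>\<^sub>m W)"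

lemma perturbed_mat_carrier:
  "W \<in> carrier_mat (sum_list L) (sum_list L) \<Longrightarrow>
    perturbed_mat L d W \<epsilon> \<in> carrier_mat (sum_list L) (sum_list L)"
  unfolding perturbed_mat_def by (rule mult_carrier_mat) auto

lemma perturbed_mat_index:
  assumes "W \<in> carrier_mat (sum_list L) (sum_list L)" "i < sum_list L" "j < sum_list L"
  shows "perturbed_mat L d W \<epsilon> $$ (i, j) =
    d (block_of L i) * ((if i = j then 1 else 0) + of_real \<epsilon> * W $$ (i, j))"
  using assms unfolding perturbed_mat_def
  by (subst block_scalar_mat_mult_index[where n = "sum_list L"]) auto

lemma perturbed_mat_mult_vec:
  assumes W: "W \<in> carrier_mat (sum_list L) (sum_list L)" and v: "v \<in> carrier_vec (sum_list L)"
    and i: "i < sum_list L"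
  shows "(perturbed_mat L d W \<epsilon> *\<^sub>v v) $ i =
    d (block_of L i) * (v $ i + of_real \<epsilon> * (W *\<^sub>v v) $ i)"
proof -
  have "(1\<^sub>m (sum_list L) + of_real \<epsilon> \<cdot>\<^sub>m W) *\<^sub>v v = v + of_real \<epsilon> \<cdot>\<^sub>v (W *\<^sub>v v)"
    using W v by (auto simp: add_mult_distrib_mat_vec[of _ "sum_list L" "sum_list L"]
        scalar_prod_def sum_distrib_left ac_simps intro!: eq_vecI)
  then show ?thesis
    using W v i unfolding perturbed_mat_def
    by (subst assoc_mult_mat_vec[of _ "sum_list L" "sum_list L"]) (auto simp: block_scalar_mat_mult_vec)
qed

(* For \<epsilon> \<noteq> 0 this is \<mu> I - P with \<mu> = d s (1 + \<epsilon> \<nu>), except that the rows of block s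
   are divided by \<epsilon> d s. *)
definition rescaled_char_mat ::
  "nat list \<Rightarrow> (nat \<Rightarrow> complex) \<Rightarrow> complex mat \<Rightarrow> nat \<Rightarrow> complex \<Rightarrow> real \<Rightarrow> complex mat" where
  "rescaled_char_mat L d W s \<nu> \<epsilon> =
     row_select_mat (bw_block L s) (\<nu> \<cdot>\<^sub>m 1\<^sub>m (sum_list L) - W)
       ((d s * (1 + of_real \<epsilon> * \<nu>)) \<cdot>\<^sub>m 1\<^sub>m (sum_list L) - perturbed_mat L d W \<epsilon>)"

lemma rescaled_char_mat_carrier:
  "W \<in> carrier_mat (sum_list L) (sum_list L) \<Longrightarrow>
    rescaled_char_mat L d W s \<nu> \<epsilon> \<in> carrier_mat (sum_list L) (sum_list L)"
  unfolding rescaled_char_mat_def by (rule row_select_mat_carrier) auto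

lemma rescaled_char_mat_index:
  assumes "W \<in> carrier_mat (sum_list L) (sum_list L)" "i < sum_list L" "j < sum_list L"
  shows "rescaled_char_mat L d W s \<nu> \<epsilon> $$ (i, j) =
    (if i \<in> bw_block L s then (if i = j then \<nu> else 0) - W $$ (i, j)
     else (if i = j then d s * (1 + of_real \<epsilon> * \<nu>) else 0)
       - d (block_of L i) * ((if i = j then 1 else 0) + of_real \<epsilon> * W $$ (i, j)))"
  using assms perturbed_mat_carrier[OF assms(1), of d \<epsilon>]
  by (auto simp: rescaled_char_mat_def row_select_mat_def perturbed_mat_index carrier_matD)

lemma rescaled_char_mat_mult_vec:
  assumes W: "W \<in> carrier_mat (sum_list L) (sum_list L)" and v: "v \<in> carrier_vec (sum_list L)"
    and i: "i < sum_list L"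
  shows "(rescaled_char_mat L d W s \<nu> \<epsilon> *\<^sub>v v) $ i =
    (if i \<in> bw_block L s then \<nu> * v $ i - (W *\<^sub>v v) $ i
     else d s * (1 + of_real \<epsilon> * \<nu>) * v $ i - (perturbed_mat L d W \<epsilon> *\<^sub>v v) $ i)"
proof -
  have P: "perturbed_mat L d W \<epsilon> \<in> carrier_mat (sum_list L) (sum_list L)"
    using W by (rule perturbed_mat_carrier)
  show ?thesis
    unfolding rescaled_char_mat_def
    using W v i P by (subst row_select_mat_mult_vec[of _ "sum_list L" "sum_list L"])
      (auto simp: minus_mult_distrib_mat_vec[of _ "sum_list L" "sum_list L"] smult_one_mat_mult_vec)
qed

lemma continuous_on_det_rescaled_char_mat:
  assumes W: "W \<in> carrier_mat (sum_list L) (sum_list L)"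
  shows "continuous_on UNIV (\<lambda>p. det (rescaled_char_mat L d W s (fst p) (snd p)))"
proof -
  have entry: "continuous_on UNIV (\<lambda>p. rescaled_char_mat L d W s (fst p) (snd p) $$ (i, j))"
    if "i < sum_list L" "j < sum_list L" for i j
    using W that by (cases "i \<in> bw_block L s"; cases "i = j")
      (auto simp: rescaled_char_mat_index intro!: continuous_intros)
  show ?thesis
    unfolding det_def'[OF rescaled_char_mat_carrier[OF W]]
    by (intro continuous_intros entry) (auto simp: permutes_in_image)
qed

lemma holomorphic_det_rescaled_char_mat:
  assumes W: "W \<in> carrier_mat (sum_list L) (sum_list L)"
  shows "(\<lambda>\<nu>. det (rescaled_char_mat L d W s \<nu> \<epsilon>)) holomorphic_on UNIV"
proof -
  have entry: "(\<lambda>\<nu>. rescaled_char_mat L d W s \<nu> \<epsilon> $$ (i, j)) holomorphic_on UNIV"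
    if "i < sum_list L" "j < sum_list L" for i j
    using W that by (cases "i \<in> bw_block L s"; cases "i = j")
      (auto simp: rescaled_char_mat_index intro!: holomorphic_intros)
  show ?thesis
    unfolding det_def'[OF rescaled_char_mat_carrier[OF W]]
    by (intro holomorphic_intros entry) (auto simp: permutes_in_image)
qed

lemma det_rescaled_char_mat_eq_0_imp_eigenvalue:
  assumes W: "W \<in> carrier_mat (sum_list L) (sum_list L)" and s: "s < length L"
    and det0: "det (rescaled_char_mat L d W s \<nu> \<epsilon>) = 0"
  shows "eigenvalue (perturbed_mat L d W \<epsilon>) (d s * (1 + of_real \<epsilon> * \<nu>))"
proof -
  let ?N = "sum_list L" and ?\<mu> = "d s * (1 + of_real \<epsilon> * \<nu>)"
  have P: "perturbed_mat L d W \<epsilon> \<in> carrier_mat ?N ?N"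
    using W by (rule perturbed_mat_carrier)
  obtain v where v: "v \<in> carrier_vec ?N" "v \<noteq> 0\<^sub>v ?N"
    and kernel: "rescaled_char_mat L d W s \<nu> \<epsilon> *\<^sub>v v = 0\<^sub>v ?N"
    using det0 det_0_iff_vec_prod_zero[OF rescaled_char_mat_carrier[OF W]] by blast
  have row: "(rescaled_char_mat L d W s \<nu> \<epsilon> *\<^sub>v v) $ i = 0" if "i < ?N" for i
    using kernel that by simp
  have "perturbed_mat L d W \<epsilon> *\<^sub>v v = ?\<mu> \<cdot>\<^sub>v v"
  proof (rule eq_vecI)
    fix i assume "i < dim_vec (?\<mu> \<cdot>\<^sub>v v)"
    then have i: "i < ?N" using v by simp
    show "(perturbed_mat L d W \<epsilon> *\<^sub>v v) $ i = (?\<mu> \<cdot>\<^sub>v v) $ i"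
    proof (cases "i \<in> bw_block L s")
      case True
      then have "block_of L i = s" and "(W *\<^sub>v v) $ i = \<nu> * v $ i"
        using row[OF i] block_of_eqI[OF s] by (auto simp: rescaled_char_mat_mult_vec[OF W v(1) i])
      then show ?thesis
        using v i by (simp add: perturbed_mat_mult_vec[OF W v(1) i] algebra_simps)
    next
      case False
      then show ?thesis
        using row[OF i] v i by (simp add: rescaled_char_mat_mult_vec[OF W v(1) i])
    qed
  qed (use P v in simp)
  then show ?thesis
    using v P unfolding eigenvalue_def eigenvector_def by auto
qed

lemma eigenvalue_block_mat_imp_det_rescaled_char_mat_eq_0:
  assumes W: "W \<in> carrier_mat (sum_list L) (sum_list L)" and s: "s < length L"
    and ev: "eigenvalue (block_mat L W s) \<nu>"
  shows "det (rescaled_char_mat L d W s \<nu> 0) = 0"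
proof -
  let ?N = "sum_list L" and ?a = "bw_start L s"
  obtain u where u: "u \<in> carrier_vec (L ! s)" "u \<noteq> 0\<^sub>v (L ! s)"
    and eigen: "block_mat L W s *\<^sub>v u = \<nu> \<cdot>\<^sub>v u"
    using ev by (auto simp: eigenvalue_def eigenvector_def block_mat_def)
  define v where "v = vec ?N (\<lambda>j. if j \<in> bw_block L s then u $ (j - ?a) else 0)"
  have v: "v \<in> carrier_vec ?N" and supp: "\<And>j. j < ?N \<Longrightarrow> j \<notin> bw_block L s \<Longrightarrow> v $ j = 0"
    by (simp_all add: v_def)
  have v_block: "v $ (?a + j) = u $ j" if "j < L ! s" for j
    using that bw_block_end_le[OF s] by (simp add: v_def bw_block_def)
  then have restrict: "vec (L ! s) (\<lambda>j. v $ (?a + j)) = u"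
    using u(1) by (auto intro!: eq_vecI)
  have "v \<noteq> 0\<^sub>v ?N"
  proof
    assume "v = 0\<^sub>v ?N"
    then have "vec (L ! s) (\<lambda>j. v $ (?a + j)) = 0\<^sub>v (L ! s)"
      using bw_block_end_le[OF s] by (intro eq_vecI) auto
    with restrict u(2) show False by simp
  qed
  moreover have "rescaled_char_mat L d W s \<nu> 0 *\<^sub>v v = 0\<^sub>v ?N"
  proof (rule eq_vecI)
    fix i assume "i < dim_vec (0\<^sub>v ?N :: complex vec)"
    then have i: "i < ?N" by simp
    show "(rescaled_char_mat L d W s \<nu> 0 *\<^sub>v v) $ i = 0\<^sub>v ?N $ i"
    proof (cases "i \<in> bw_block L s")
      case True
      then obtain i' where i': "i = ?a + i'" "i' < L ! s"
        by (auto simp: bw_block_def dest!: le_Suc_ex)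
      have "(W *\<^sub>v v) $ i = \<nu> * v $ i"
        using mult_mat_vec_supported_on_bw_block[OF W s v supp i'(2)] eigen u(1) i'
        by (simp add: restrict v_block)
      with True i show ?thesis
        by (simp add: rescaled_char_mat_mult_vec[OF W v i])
    next
      case False
      with i show ?thesis
        by (simp add: rescaled_char_mat_mult_vec[OF W v i] perturbed_mat_mult_vec[OF W v i] supp)
    qed
  qed (use rescaled_char_mat_carrier[OF W, of d s \<nu> 0] in simp)
  ultimately show ?thesis
    using det_0_iff_vec_prod_zero[OF rescaled_char_mat_carrier[OF W]] v by blast
qed

lemma det_rescaled_char_mat_eq_0_imp_eigenvalue_block_mat:
  assumes W: "W \<in> carrier_mat (sum_list L) (sum_list L)" and s: "s < length L"
    and distinct: "\<And>t. t < length L \<Longrightarrow> t \<noteq> s \<Longrightarrow> d t \<noteq> d s"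
    and det0: "det (rescaled_char_mat L d W s \<nu> 0) = 0"
  shows "eigenvalue (block_mat L W s) \<nu>"
proof -
  let ?N = "sum_list L" and ?a = "bw_start L s"
  obtain v where v: "v \<in> carrier_vec ?N" "v \<noteq> 0\<^sub>v ?N"
    and kernel: "rescaled_char_mat L d W s \<nu> 0 *\<^sub>v v = 0\<^sub>v ?N"
    using det0 det_0_iff_vec_prod_zero[OF rescaled_char_mat_carrier[OF W]] by blast
  have row: "(rescaled_char_mat L d W s \<nu> 0 *\<^sub>v v) $ i = 0" if "i < ?N" for i
    using kernel that by simp
  have supp: "v $ j = 0" if j: "j < ?N" and out: "j \<notin> bw_block L s" for j
  proof -
    have "(d s - d (block_of L j)) * v $ j = 0"
      using row[OF j] out
      by (simp add: rescaled_char_mat_mult_vec[OF W v(1) j] perturbed_mat_mult_vec[OF W v(1) j]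
          algebra_simps)
    moreover have "d (block_of L j) \<noteq> d s"
      using block_of_bw_block[OF j] out distinct by metis
    ultimately show ?thesis by simp
  qed
  define u where "u = vec (L ! s) (\<lambda>j. v $ (?a + j))"
  obtain j where j: "j < ?N" "v $ j \<noteq> 0"
    using v by (metis carrier_vecD eq_vecI index_zero_vec)
  then have "j \<in> bw_block L s"
    using supp by blast
  then have "u $ (j - ?a) \<noteq> 0" "j - ?a < L ! s"
    using j by (auto simp: u_def bw_block_def)
  then have "u \<noteq> 0\<^sub>v (L ! s)"
    by auto
  moreover have "block_mat L W s *\<^sub>v u = \<nu> \<cdot>\<^sub>v u"
  proof (rule eq_vecI)
    fix i assume "i < dim_vec (\<nu> \<cdot>\<^sub>v u)"
    then have i: "i < L ! s" by (simp add: u_def)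
    have ai: "?a + i < ?N" "?a + i \<in> bw_block L s"
      using i bw_block_end_le[OF s] by (auto simp: bw_block_def)
    have "(W *\<^sub>v v) $ (?a + i) = \<nu> * v $ (?a + i)"
      using row[OF ai(1)] ai(2) by (simp add: rescaled_char_mat_mult_vec[OF W v(1) ai(1)])
    then show "(block_mat L W s *\<^sub>v u) $ i = (\<nu> \<cdot>\<^sub>v u) $ i"
      using mult_mat_vec_supported_on_bw_block[OF W s v(1) supp i] i by (simp add: u_def)
  qed (simp add: u_def block_mat_def)
  ultimately show ?thesis
    unfolding eigenvalue_def eigenvector_def
    by (intro exI[of _ u]) (auto simp: u_def block_mat_def)
qed

lemma eventually_rescaled_char_det_root_near:
  assumes W: "W \<in> carrier_mat (sum_list L) (sum_list L)" and s: "s < length L"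
    and distinct: "\<And>t. t < length L \<Longrightarrow> t \<noteq> s \<Longrightarrow> d t \<noteq> d s"
    and ev: "eigenvalue (block_mat L W s) \<theta>" and r: "r > 0"
    and isolated: "\<And>\<mu>. eigenvalue (block_mat L W s) \<mu> \<Longrightarrow> \<mu> \<noteq> \<theta> \<Longrightarrow> r < dist \<mu> \<theta>"
  shows "\<forall>\<^sub>F \<epsilon> in nhds 0. \<exists>\<nu>\<in>ball \<theta> r. det (rescaled_char_mat L d W s \<nu> \<epsilon>) = 0"
proof (rule holomorphic_zero_persists[where F = "\<lambda>\<nu> \<epsilon>. det (rescaled_char_mat L d W s \<nu> \<epsilon>)"])
  show "continuous_on UNIV (\<lambda>p. det (rescaled_char_mat L d W s (fst p) (snd p)))"
    using W by (rule continuous_on_det_rescaled_char_mat)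
  show "(\<lambda>\<nu>. det (rescaled_char_mat L d W s \<nu> \<epsilon>)) holomorphic_on ball \<theta> r" for \<epsilon>
    using holomorphic_det_rescaled_char_mat[OF W] by (rule holomorphic_on_subset) simp
  show "det (rescaled_char_mat L d W s \<theta> 0) = 0"
    using W s ev by (rule eigenvalue_block_mat_imp_det_rescaled_char_mat_eq_0)
  show "det (rescaled_char_mat L d W s z 0) \<noteq> 0" if z: "z \<in> sphere \<theta> r" for z
  proof
    assume "det (rescaled_char_mat L d W s z 0) = 0"
    then have "eigenvalue (block_mat L W s) z"
      using det_rescaled_char_mat_eq_0_imp_eigenvalue_block_mat[of W L s d z] W s distinct by blast
    with isolated z r show False
      by (force simp: dist_commute)
  qed
qed (fact r)

lemma card_eigenvalues_perturbed_mat_eqI: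
  assumes W: "W \<in> carrier_mat (sum_list L) (sum_list L)"
    and simple: "\<And>s. s < length L \<Longrightarrow> card {\<theta>. eigenvalue (block_mat L W s) \<theta>} = L ! s"
    and nonzero: "\<And>s. s < length L \<Longrightarrow> d s \<noteq> 0" and \<epsilon>: "\<epsilon> \<noteq> 0"
    and separated: "\<And>s \<theta> \<theta>'. s < length L \<Longrightarrow> eigenvalue (block_mat L W s) \<theta> \<Longrightarrow>
      eigenvalue (block_mat L W s) \<theta>' \<Longrightarrow> \<theta> \<noteq> \<theta>' \<Longrightarrow> 2 * r < dist \<theta> \<theta>'"
    and roots: "\<And>s \<theta>. s < length L \<Longrightarrow> eigenvalue (block_mat L W s) \<theta> \<Longrightarrow>
      \<exists>\<nu>\<in>ball \<theta> r. det (rescaled_char_mat L d W s \<nu> \<epsilon>) = 0"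
    and apart: "\<And>s t \<theta> \<theta>' \<nu> \<nu>'. s < length L \<Longrightarrow> t < length L \<Longrightarrow> s \<noteq> t \<Longrightarrow>
      eigenvalue (block_mat L W s) \<theta> \<Longrightarrow> eigenvalue (block_mat L W t) \<theta>' \<Longrightarrow>
      \<nu> \<in> ball \<theta> r \<Longrightarrow> \<nu>' \<in> ball \<theta>' r \<Longrightarrow> d s * (1 + of_real \<epsilon> * \<nu>) \<noteq> d t * (1 + of_real \<epsilon> * \<nu>')"
  shows "card {\<mu>. eigenvalue (perturbed_mat L d W \<epsilon>) \<mu>} = sum_list L"
proof -
  define I where "I = Sigma {..<length L} (\<lambda>s. {\<theta>. eigenvalue (block_mat L W s) \<theta>})"
  have "card I = (\<Sum>s<length L. card {\<theta>. eigenvalue (block_mat L W s) \<theta>})"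
    unfolding I_def by (simp add: card_SigmaI eigenvalues_finite_card_le(1)[OF block_mat_carrier])
  also have "\<dots> = sum_list L"
    using simple by (simp add: sum_list_sum_nth atLeast0LessThan)
  finally have card_I: "card I = sum_list L" .
  have "\<forall>p\<in>I. \<exists>\<nu>\<in>ball (snd p) r. det (rescaled_char_mat L d W (fst p) \<nu> \<epsilon>) = 0"
    using roots by (auto simp: I_def)
  then obtain f where f: "\<And>p. p \<in> I \<Longrightarrow> f p \<in> ball (snd p) r \<and> det (rescaled_char_mat L d W (fst p) (f p) \<epsilon>) = 0"
    by metis
  define g where "g p = d (fst p) * (1 + of_real \<epsilon> * f p)" for p
  have "inj_on g I"
  proof (rule inj_onI)
    fix p q assume p: "p \<in> I" and q: "q \<in> I" and gpq: "g p = g q"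
    have same_block: "fst p = fst q"
    proof (rule ccontr)
      assume "fst p \<noteq> fst q"
      then show False
        using apart[of "fst p" "fst q" "snd p" "snd q" "f p" "f q"] f[OF p] f[OF q] p q gpq
        by (auto simp: g_def I_def)
    qed
    then have "f p = f q"
      using gpq nonzero p \<epsilon> by (auto simp: g_def I_def)
    then have "dist (snd p) (snd q) < 2 * r"
      using f[OF p] f[OF q] dist_triangle_less_add[of "snd p" "f p" r "snd q" r]
      by (simp add: dist_commute)
    then have "snd p = snd q"
      using separated p q same_block by (force simp: I_def)
    with same_block show "p = q"
      by (simp add: prod_eq_iff)
  qed
  moreover have "eigenvalue (perturbed_mat L d W \<epsilon>) (g p)" if "p \<in> I" for p
    using f[OF that] that W by (auto simp: g_def I_def intro: det_rescaled_char_mat_eq_0_imp_eigenvalue)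
  ultimately show ?thesis
    using card_eigenvalues_eqI[OF perturbed_mat_carrier[OF W]] card_I by blast
qed

lemma eventually_card_eigenvalues_perturbed_mat:
  assumes W: "W \<in> carrier_mat (sum_list L) (sum_list L)"
    and simple: "\<And>s. s < length L \<Longrightarrow> card {\<theta>. eigenvalue (block_mat L W s) \<theta>} = L ! s"
    and nonzero: "\<And>s. s < length L \<Longrightarrow> d s \<noteq> 0"
    and distinct: "\<And>s t. s < length L \<Longrightarrow> t < length L \<Longrightarrow> s \<noteq> t \<Longrightarrow> d s \<noteq> d t"
  shows "\<forall>\<^sub>F \<epsilon> in at 0. card {\<mu>. eigenvalue (perturbed_mat L d W \<epsilon>) \<mu>} = sum_list L"
proof -
  define I where "I = Sigma {..<length L} (\<lambda>s. {\<theta>. eigenvalue (block_mat L W s) \<theta>})"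
  have "finite I"
    unfolding I_def by (auto intro: eigenvalues_finite_card_le(1)[OF block_mat_carrier])
  obtain r' where r': "r' > 0" and sep: "\<And>x y. x \<in> snd ` I \<Longrightarrow> y \<in> snd ` I \<Longrightarrow> x \<noteq> y \<Longrightarrow> r' < dist x y"
    using finite_separation_radius[of "snd ` I"] \<open>finite I\<close> by blast
  define r where "r = r' / 2"
  have separated: "2 * r < dist \<theta> \<theta>'" if "(s, \<theta>) \<in> I" "(s, \<theta>') \<in> I" "\<theta> \<noteq> \<theta>'" for s \<theta> \<theta>'
    using sep[of \<theta> \<theta>'] that by (force simp: r_def)
  have r: "r > 0"
    using r' by (simp add: r_def)
  have isolated: "r < dist \<mu> \<theta>" if "(s, \<theta>) \<in> I" "(s, \<mu>) \<in> I" "\<mu> \<noteq> \<theta>" for s \<theta> \<mu>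
    using separated[OF that(2,1,3)] r by simp
  define K where "K = (\<Union>p\<in>I. cball (snd p) r)"
  have "bounded K"
    unfolding K_def using \<open>finite I\<close> by auto
  have roots: "\<forall>\<^sub>F \<epsilon> in nhds 0. \<forall>p\<in>I. \<exists>\<nu>\<in>ball (snd p) r. det (rescaled_char_mat L d W (fst p) \<nu> \<epsilon>) = 0"
    using \<open>finite I\<close> r isolated distinct
    by (intro eventually_ball_finite) (auto simp: I_def intro!: eventually_rescaled_char_det_root_near[OF W])
  have apart: "\<forall>\<^sub>F \<epsilon> in nhds 0. \<forall>s\<in>{..<length L}. \<forall>t\<in>{..<length L}. s \<noteq> t \<longrightarrow>
      (\<forall>\<nu>\<in>K. \<forall>\<nu>'\<in>K. d s * (1 + of_real \<epsilon> * \<nu>) \<noteq> d t * (1 + of_real \<epsilon> * \<nu>'))"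
    using \<open>bounded K\<close> distinct by (auto intro!: eventually_ball_finite eventually_scaled_perturbations_differ)
  have "\<forall>\<^sub>F \<epsilon> in nhds 0. \<epsilon> \<noteq> 0 \<longrightarrow> card {\<mu>. eigenvalue (perturbed_mat L d W \<epsilon>) \<mu>} = sum_list L"
    using roots apart
  proof eventually_elim
    case (elim \<epsilon>)
    show ?case
    proof
      assume "\<epsilon> \<noteq> 0"
      show "card {\<mu>. eigenvalue (perturbed_mat L d W \<epsilon>) \<mu>} = sum_list L"
      proof (rule card_eigenvalues_perturbed_mat_eqI[OF W simple nonzero \<open>\<epsilon> \<noteq> 0\<close>])
        show "2 * r < dist \<theta> \<theta>'" if "s < length L" "eigenvalue (block_mat L W s) \<theta>"
          "eigenvalue (block_mat L W s) \<theta>'" "\<theta> \<noteq> \<theta>'" for s \<theta> \<theta>'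
          using separated that by (auto simp: I_def)
        show "\<exists>\<nu>\<in>ball \<theta> r. det (rescaled_char_mat L d W s \<nu> \<epsilon>) = 0"
          if "s < length L" "eigenvalue (block_mat L W s) \<theta>" for s \<theta>
          using elim(1) that by (force simp: I_def)
        show "d s * (1 + of_real \<epsilon> * \<nu>) \<noteq> d t * (1 + of_real \<epsilon> * \<nu>')"
          if "s < length L" "t < length L" "s \<noteq> t" "eigenvalue (block_mat L W s) \<theta>"
            "eigenvalue (block_mat L W t) \<theta>'" "\<nu> \<in> ball \<theta> r" "\<nu>' \<in> ball \<theta>' r" for s t \<theta> \<theta>' \<nu> \<nu>'
        proof -
          have "\<nu> \<in> K" "\<nu>' \<in> K"
            using that unfolding K_def I_def by force+
          with elim(2) that show ?thesis by blast
        qed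
      qed
    qed
  qed
  then show ?thesis
    by (simp add: eventually_at_filter)
qed

theorem theorem3p3:
  fixes N :: nat and L :: "nat list" and Wdot :: "real mat" and \<beta> :: "nat \<Rightarrow> real" and k :: int
  assumes "N \<ge> 1" and "1 \<le> length L" and "length L \<le> N"
    and "bw_vector L N"
    and "L_admissible L Wdot"
    and "\<beta> \<in> Gamma_set (length L)"
  shows "\<exists>\<gamma>>0. \<forall>\<epsilon>::real. 0 < \<epsilon> \<and> \<epsilon> < \<gamma> \<longrightarrow>
           card {\<mu>::complex. eigenvalue
              (D_mat k \<beta> L * (1\<^sub>m N + complex_of_real \<epsilon> \<cdot>\<^sub>m map_mat complex_of_real Wdot)) \<mu>} = N"
proof -
  have N: "sum_list L = N"
    using assms(4) by (simp add: bw_vector_def)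
  let ?W = "map_mat complex_of_real Wdot"
  have Wdot: "Wdot \<in> carrier_mat N N" and card_Wdot: "card {x. eigenvalue Wdot x} = N"
    and card_blocks: "\<And>s. s < length L \<Longrightarrow> card {x. eigenvalue (block_mat L Wdot s) x} = L ! s"
    using assms(5) N by (auto simp: L_admissible_def Let_def)
  have W: "?W \<in> carrier_mat N N"
    using Wdot by simp
  have "\<forall>\<^sub>F \<epsilon> in at 0. card {\<mu>. eigenvalue (D_mat k \<beta> L * (1\<^sub>m N + of_real \<epsilon> \<cdot>\<^sub>m ?W)) \<mu>} = N"
  proof (cases "k = 0")
    case True
    have "D_mat k \<beta> L = block_scalar_mat [N] (\<lambda>_. 1)"
      unfolding True D_mat_def block_scalar_mat_def N by (intro eq_matI) simp_all
    moreover have "block_mat [N] ?W 0 = ?W"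
      using W by (auto simp: block_mat_def bw_start_def intro!: eq_matI)
    ultimately show ?thesis
      using eventually_card_eigenvalues_perturbed_mat[of ?W "[N]" "\<lambda>_. 1"] W
        card_eigenvalues_map_of_real[OF Wdot card_Wdot]
      by (simp add: perturbed_mat_def)
  next
    case False
    define d where "d s = exp (- 2 * pi * \<i> * of_int k * of_real (\<beta> s))" for s
    have "D_mat k \<beta> L = block_scalar_mat L d"
      unfolding D_mat_def block_scalar_mat_def by (intro eq_matI) (simp_all add: d_def)
    moreover have "d s \<noteq> d t" if "s < length L" "t < length L" "s \<noteq> t" for s t
      using assms(6) False that by (simp add: Gamma_set_def d_def)
    moreover have "card {\<mu>. eigenvalue (block_mat L ?W s) \<mu>} = L ! s" if "s < length L" for s
    proof -
      have "block_mat L ?W s = map_mat complex_of_real (block_mat L Wdot s)"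
        using block_mat_map_mat[of Wdot L s] Wdot N that by simp
      then show ?thesis
        using card_eigenvalues_map_of_real[OF block_mat_carrier card_blocks[OF that]] by simp
    qed
    ultimately show ?thesis
      using eventually_card_eigenvalues_perturbed_mat[of ?W L d] W N
      by (simp add: perturbed_mat_def d_def)
  qed
  then obtain \<gamma> where "\<gamma> > 0" and "\<And>\<epsilon>. \<epsilon> \<noteq> 0 \<Longrightarrow> \<bar>\<epsilon>\<bar> < \<gamma> \<Longrightarrow>
      card {\<mu>. eigenvalue (D_mat k \<beta> L * (1\<^sub>m N + of_real \<epsilon> \<cdot>\<^sub>m ?W)) \<mu>} = N"
    unfolding eventually_at dist_real_def by auto
  then show ?thesis
    by (intro exI[of _ \<gamma>]) auto
qed

end
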